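(* For every $n\geq 2$, let $D_n^2$ be the random variable that chooses independently a pair of trees $T,T'\in\mathcal{T}_n$ and computes $d_{\varphi,2}(T,T')^2$. Under the Yule model its expected value is $$E_Y(D_n^2)=\frac{2n}{n-1}\big(3n^2-10n-1+8(n+1)H_n-4(n+1)H_n^2\big),$$ where $H_n=\sum_{i=1}^n 1/i$ is the $n$-th harmonic number.
   Context: A phylogenetic tree with $n$ leaves is a fully resolved (binary) rooted tree, viewed as a directed graph with arcs pointing away from the root, whose leaves are bijectively labeled by $\{1,\dots,n\}$; $\mathcal{T}_n$ denotes the set of all such trees (up to isomorphism preserving labels). The depth $\delta_T(v)$ of a node $v$ is the number of arcs from the root to $v$. For leaves $i\neq j$, the cophenetic value $\varphi_T(i,j)$ is the depth of the lowest common ancestor of $i$ and $j$; also $\varphi_T(i,i)=\delta_T(i)$. The euclidean cophenetic metric is $d_{\varphi,2}(T_1,T_2)=\sqrt{\sum_{1\le i\le j\le n}(\varphi_{T_1}(i,j)-\varphi_{T_2}(i,j))^2}$. The Yule model gives $T\in\mathcal{T}_n$ probability $P_Y(T)=\frac{2^{n-1}}{n!}\prod_{v}\frac{1}{\ell_T(v)-1}$, the product over internal nodes $v$ of $T$, with $\ell_T(v)$ the number of leaves descending from $v$. The two trees are chosen independently, each with probability $P_Y$. *)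

theory Defs
  imports Complex_Main
begin

text \<open>Unordered trees (trees up to
isomorphism preserving labels) are represented canonically: at every internal
node the left subtree contains the smallest leaf label below that node.\<close>

datatype ptree = Leaf nat | Node ptree ptree

fun leaves :: "ptree \<Rightarrow> nat list" where
  "leaves (Leaf a) = [a]"
| "leaves (Node l r) = leaves l @ leaves r"

fun canonical :: "ptree \<Rightarrow> bool" where
  "canonical (Leaf a) = True"
| "canonical (Node l r) =
     (canonical l \<and> canonical r \<and> Min (set (leaves l)) < Min (set (leaves r)))"

definition phylo_trees :: "nat \<Rightarrow> ptree set" where
  "phylo_trees n = {t. distinct (leaves t) \<and> set (leaves t) = {1..n} \<and> canonical t}"

fun depth :: "ptree \<Rightarrow> nat \<Rightarrow> nat" where
  "depth (Leaf a) i = 0"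
| "depth (Node l r) i =
     (if i \<in> set (leaves l) then Suc (depth l i) else Suc (depth r i))"

fun lca_depth :: "ptree \<Rightarrow> nat \<Rightarrow> nat \<Rightarrow> nat" where
  "lca_depth (Leaf a) i j = 0"
| "lca_depth (Node l r) i j =
     (if i \<in> set (leaves l) \<and> j \<in> set (leaves l) then Suc (lca_depth l i j)
      else if i \<in> set (leaves r) \<and> j \<in> set (leaves r) then Suc (lca_depth r i j)
      else 0)"

definition coph :: "ptree \<Rightarrow> nat \<Rightarrow> nat \<Rightarrow> nat" where
  "coph t i j = (if i = j then depth t i else lca_depth t i j)"

definition d_coph2 :: "nat \<Rightarrow> ptree \<Rightarrow> ptree \<Rightarrow> real" where
  "d_coph2 n T1 T2 =
     sqrt (\<Sum>(i,j)\<in>{(i,j). 1 \<le> i \<and> i \<le> j \<and> j \<le> n}.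
             (real (coph T1 i j) - real (coph T2 i j))^2)"

fun yule_prod :: "ptree \<Rightarrow> real" where
  "yule_prod (Leaf a) = 1"
| "yule_prod (Node l r) =
     (1 / (real (length (leaves (Node l r))) - 1)) * yule_prod l * yule_prod r"

definition yule_prob :: "nat \<Rightarrow> ptree \<Rightarrow> real" where
  "yule_prob n T = 2 ^ (n - 1) / fact n * yule_prod T"

definition expected_D2_yule :: "nat \<Rightarrow> real" where
  "expected_D2_yule n =
     (\<Sum>T1\<in>phylo_trees n. \<Sum>T2\<in>phylo_trees n.
        yule_prob n T1 * yule_prob n T2 * (d_coph2 n T1 T2)^2)"

end

theory Submission
  imports Defs "HOL-Analysis.Harmonic_Numbers"
begin

text \<open>Under the Yule model a tree on a leaf set \<open>S\<close> of size \<open>n \<ge> 2\<close> is a root joining two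
  independent Yule trees on complementary clusters, the left cluster being a given proper
  nonempty subset \<open>A\<close> with probability \<open>1 / ((n - 1) (n choose |A|))\<close>. Conditioning on the
  root therefore gives, for every function of the cophenetic value of two leaves \<open>i, j\<close>, a
  recurrence in \<open>n\<close> whose solutions express the first two moments of a depth and of a proper
  cophenetic value through \<open>H_n\<close> and \<open>H_n^(2) = \<Sum>k=1..n. 1/k\<^sup>2\<close>. As the two trees are
  drawn independently, \<open>E(D_n\<^sup>2)\<close> is the sum over all pairs \<open>i \<le> j\<close> of twice the variance of
  the cophenetic value of \<open>i, j\<close>, in which the \<open>H_n^(2)\<close> terms cancel.\<close>

definition trees_on :: "nat set \<Rightarrow> ptree set" where
  "trees_on S = {t. distinct (leaves t) \<and> set (leaves t) = S \<and> canonical t}"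

definition splits :: "'a set \<Rightarrow> 'a set set" where
  "splits S = {A. A \<subseteq> S \<and> A \<noteq> {} \<and> A \<noteq> S}"

lemma leaves_nonempty: "leaves t \<noteq> []"
  by (induction t) auto

lemma set_leaves_trees_on: "t \<in> trees_on S \<Longrightarrow> set (leaves t) = S"
  by (simp add: trees_on_def)

lemma trees_on_singleton: "trees_on {a} = {Leaf a}"
proof -
  have "t = Leaf a" if "distinct (leaves t)" "set (leaves t) = {a}" for t
  proof (cases t)
    case (Node l r)
    then have "set (leaves l) \<subseteq> {a}" "set (leaves r) \<subseteq> {a}" using that(2) by auto
    then have "set (leaves l) = {a}" "set (leaves r) = {a}"
      using leaves_nonempty subset_singleton_iff set_empty by metis+
    then show ?thesis using that(1) Node by auto
  qed (use that in auto)
  then show ?thesis by (auto simp: trees_on_def)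
qed

lemma card_less_two_singleton:
  assumes "finite S" "a \<in> S" "\<not> 2 \<le> card S"
  shows "S = {a}"
proof -
  have "card S \<le> Suc 0" using assms(3) by simp
  then have "\<forall>b\<in>S. b = a" using card_le_Suc0_iff_eq[OF assms(1)] assms(2) by blast
  then show ?thesis using assms(2) by blast
qed

lemma splits_double_complement: "A \<in> splits S \<Longrightarrow> S - (S - A) = A"
  unfolding splits_def by auto

lemma finite_splits: "finite S \<Longrightarrow> finite (splits S)"
  unfolding splits_def by (rule finite_subset[of _ "Pow S"]) auto

lemma splits_psubset: "A \<in> splits S \<Longrightarrow> A \<subset> S \<and> S - A \<subset> S"
  unfolding splits_def by auto

lemma card_splits:
  assumes "finite S" "A \<in> splits S"
  shows "finite A" "0 < card A" "card A < card S" "card (S - A) = card S - card A"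
  using assms psubset_card_mono[OF assms(1)] card_Diff_subset[of A S]
  by (auto simp: splits_def finite_subset card_gt_0_iff)

lemma trees_on_eq_Node_image:
  assumes "finite S" "2 \<le> card S"
  shows "trees_on S = (\<lambda>(A, l, r). Node l r) `
    (SIGMA A:{A \<in> splits S. Min S \<in> A}. trees_on A \<times> trees_on (S - A))"
proof (intro equalityI subsetI)
  fix t assume t: "t \<in> trees_on S"
  then have t': "distinct (leaves t)" "set (leaves t) = S" "canonical t"
    by (auto simp: trees_on_def)
  show "t \<in> (\<lambda>(A, l, r). Node l r) ` (SIGMA A:{A \<in> splits S. Min S \<in> A}. trees_on A \<times> trees_on (S - A))"
  proof (cases t)
    case (Leaf a)
    with t'(2) have "S = {a}" by simp
    with assms(2) have False by simp
    then show ?thesis ..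
  next
    case (Node l r)
    let ?A = "set (leaves l)" and ?B = "set (leaves r)"
    have ne: "?A \<noteq> {}" "?B \<noteq> {}" using leaves_nonempty by simp_all
    have disj: "?A \<inter> ?B = {}" and S: "S = ?A \<union> ?B" using t'(1,2) Node by auto
    have SA: "S - ?A = ?B" using S disj by auto
    have "Min S = Min ?A" using t'(3) Node ne Min_Un[of ?A ?B] by (simp add: S)
    then have "Min S \<in> ?A" using ne(1) by simp
    moreover have "?A \<in> splits S" using S SA ne unfolding splits_def by auto
    moreover have "l \<in> trees_on ?A" "r \<in> trees_on (S - ?A)"
      using t' Node by (auto simp: trees_on_def SA)
    ultimately show ?thesis unfolding Node by (intro rev_image_eqI[of "(?A, l, r)"]) auto
  qed
next
  fix t
  assume "t \<in> (\<lambda>(A, l, r). Node l r) ` (SIGMA A:{A \<in> splits S. Min S \<in> A}. trees_on A \<times> trees_on (S - A))"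
  then obtain A l r where t: "t = Node l r" and A: "A \<in> splits S" "Min S \<in> A"
    and l: "l \<in> trees_on A" and r: "r \<in> trees_on (S - A)" by auto
  have fin: "finite A" "finite (S - A)" and sub: "A \<subseteq> S" "A \<noteq> {}" "S - A \<noteq> {}"
    using A(1) assms(1) by (auto simp: splits_def finite_subset)
  have "Min A = Min S"
    using Min_le[OF fin(1) A(2)] Min_antimono[OF sub(1,2) assms(1)] by simp
  moreover have "Min S \<le> Min (S - A)" "Min (S - A) \<noteq> Min S"
    using Min_antimono[of "S - A" S] Min_in[OF fin(2) sub(3)] A(2) assms(1) sub(3) by auto
  ultimately have "Min A < Min (S - A)" by simp
  then show "t \<in> trees_on S" using t l r \<open>A \<subseteq> S\<close> by (auto simp: trees_on_def)
qed

lemma inj_on_Node_trees_on: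
  "inj_on (\<lambda>(A, l, r). Node l r) (SIGMA A:X. trees_on A \<times> trees_on (S - A))"
  by (auto simp: inj_on_def trees_on_def)

lemma finite_trees_on: "finite S \<Longrightarrow> finite (trees_on S)"
proof (induction S rule: finite_psubset_induct)
  case (psubset S)
  show ?case
  proof (cases "2 \<le> card S")
    case True
    have "finite (trees_on A)" "finite (trees_on (S - A))" if "A \<in> splits S" for A
      using psubset.IH splits_psubset[OF that] by simp_all
    then have "finite (SIGMA A:{A \<in> splits S. Min S \<in> A}. trees_on A \<times> trees_on (S - A))"
      using finite_splits[OF psubset.hyps] by (intro finite_SigmaI) auto
    then show ?thesis unfolding trees_on_eq_Node_image[OF psubset.hyps True] by (rule finite_imageI)
  next
    case False
    then consider "card S = 0" | "card S = 1" by linarith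
    then show ?thesis
    proof cases
      case 1
      then show ?thesis using psubset.hyps by (simp add: trees_on_def leaves_nonempty)
    next
      case 2
      then show ?thesis by (auto simp: card_1_singleton_iff trees_on_singleton)
    qed
  qed
qed

lemma sum_splits_halve:
  fixes H :: "'a set \<Rightarrow> 'b::comm_semiring_1"
  assumes "finite S" "a \<in> S" and sym: "\<And>A. A \<in> splits S \<Longrightarrow> H (S - A) = H A"
  shows "sum H (splits S) = 2 * sum H {A \<in> splits S. a \<in> A}"
proof -
  let ?P = "{A \<in> splits S. a \<in> A}"
  have "sum H (splits S - ?P) = sum H ?P"
    by (rule sum.reindex_bij_witness[where i="\<lambda>A. S - A" and j="\<lambda>A. S - A"])
       (use assms(2) sym in \<open>auto simp: splits_def\<close>)
  then show ?thesis
    using sum.subset_diff[of ?P "splits S" H] finite_splits[OF assms(1)] by (simp add: mult_2)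
qed

lemma sum_psubsets_card:
  fixes h :: "nat \<Rightarrow> real"
  assumes "finite T"
  shows "(\<Sum>B | B \<subset> T. h (card B)) = (\<Sum>k<card T. real (card T choose k) * h k)"
proof -
  have fin: "finite {B. B \<subset> T}" by (rule finite_subset[of _ "Pow T"]) (use assms in auto)
  have im: "card ` {B. B \<subset> T} \<subseteq> {..<card T}"
    using psubset_card_mono[OF assms] by auto
  have "(\<Sum>B | B \<subset> T. h (card B)) =
      (\<Sum>k<card T. \<Sum>B | B \<in> {B. B \<subset> T} \<and> card B = k. h (card B))"
    by (rule sum.group[OF fin finite_lessThan im, symmetric])
  also have "\<dots> = (\<Sum>k<card T. real (card T choose k) * h k)"
  proof (rule sum.cong[OF refl])
    fix k assume "k \<in> {..<card T}"
    then have "{B. B \<in> {B. B \<subset> T} \<and> card B = k} = {B. B \<subseteq> T \<and> card B = k}" by auto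
    then show "(\<Sum>B | B \<in> {B. B \<subset> T} \<and> card B = k. h (card B)) = real (card T choose k) * h k"
      using n_subsets[OF assms, of k] by simp
  qed
  finally show ?thesis .
qed

lemma sum_splits_containing:
  fixes h :: "nat \<Rightarrow> real"
  assumes "finite S" "K \<subseteq> S" "K \<noteq> {}"
  shows "(\<Sum>A | A \<in> splits S \<and> K \<subseteq> A. h (card A)) =
    (\<Sum>k<card S - card K. real (card S - card K choose k) * h (k + card K))"
proof -
  have fin: "finite K" "finite (S - K)" using assms by (auto intro: finite_subset)
  have "(\<Sum>A | A \<in> splits S \<and> K \<subseteq> A. h (card A)) = (\<Sum>B | B \<subset> S - K. h (card B + card K))"
  proof (rule sum.reindex_bij_witness[where i="\<lambda>B. B \<union> K" and j="\<lambda>A. A - K"])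
    fix B assume "B \<in> {B. B \<subset> S - K}"
    then show "B \<union> K - K = B" "B \<union> K \<in> {A. A \<in> splits S \<and> K \<subseteq> A}"
      using assms(2,3) by (auto simp: splits_def)
  next
    fix A assume A: "A \<in> {A. A \<in> splits S \<and> K \<subseteq> A}"
    then show "A - K \<union> K = A" "A - K \<in> {B. B \<subset> S - K}" by (auto simp: splits_def)
    have "finite A" using A assms(1) by (auto simp: splits_def intro: finite_subset)
    then show "h (card (A - K) + card K) = h (card A)"
      using A fin(1) by (simp add: card_Diff_subset card_mono)
  qed
  also have "\<dots> = (\<Sum>k<card S - card K. real (card S - card K choose k) * h (k + card K))"
    using sum_psubsets_card[OF fin(2), of "\<lambda>k. h (k + card K)"] assms(2) fin
    by (simp add: card_Diff_subset)
  finally show ?thesis .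
qed

lemma real_choose_two: "real (n choose 2) = real n * (real n - 1) / 2"
  by (induction n) (simp_all add: numeral_2_eq_2 field_simps)

lemma sum_lessThan_of_nat: "(\<Sum>k<n. real k) = real (n choose 2)"
proof (cases n)
  case (Suc m)
  have "(\<Sum>k\<le>m. k choose 1) = Suc m choose 2"
    using sum_choose_upper[of 1 m] by (simp add: numeral_2_eq_2)
  then show ?thesis unfolding Suc lessThan_Suc_atMost by (simp flip: of_nat_sum)
qed simp

section \<open>The Yule model\<close>

definition yule_weight :: "nat set \<Rightarrow> ptree \<Rightarrow> real" where
  "yule_weight S t = 2 ^ (card S - 1) / fact (card S) * yule_prod t"

definition yule_mean :: "nat set \<Rightarrow> (ptree \<Rightarrow> real) \<Rightarrow> real" where
  "yule_mean S f = (\<Sum>t\<in>trees_on S. yule_weight S t * f t)"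

lemma yule_mean_cong:
  "(\<And>t. t \<in> trees_on S \<Longrightarrow> f t = g t) \<Longrightarrow> yule_mean S f = yule_mean S g"
  unfolding yule_mean_def by simp

lemma yule_mean_add: "yule_mean S (\<lambda>t. f t + g t) = yule_mean S f + yule_mean S g"
  unfolding yule_mean_def by (simp add: distrib_left sum.distrib)

lemma yule_mean_cmult: "yule_mean S (\<lambda>t. c * f t) = c * yule_mean S f"
  unfolding yule_mean_def by (simp add: sum_distrib_left ac_simps)

lemma yule_mean_sum: "yule_mean S (\<lambda>t. \<Sum>q\<in>Q. f q t) = (\<Sum>q\<in>Q. yule_mean S (f q))"
  unfolding yule_mean_def sum_distrib_left by (rule sum.swap)

lemma yule_mean_swap:
  "yule_mean A (\<lambda>x. yule_mean B (\<lambda>y. f x y)) = yule_mean B (\<lambda>y. yule_mean A (\<lambda>x. f x y))"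
  unfolding yule_mean_def sum_distrib_left by (subst sum.swap) (simp add: ac_simps)

lemma yule_mean_singleton: "yule_mean {a} f = f (Leaf a)"
  by (simp add: yule_mean_def trees_on_singleton yule_weight_def)

text \<open>Under the Yule model the root of a tree on \<open>n\<close> leaves splits off a left cluster of each
  size \<open>k \<in> {1..n-1}\<close> with probability \<open>1 / (n - 1)\<close>, uniformly among the \<open>n choose k\<close>
  candidates; \<open>root_split_prob n k\<close> is the probability of one particular left cluster.\<close>
definition root_split_prob :: "nat \<Rightarrow> nat \<Rightarrow> real" where
  "root_split_prob n k = 1 / ((real n - 1) * real (n choose k))"

lemma root_split_prob_complement: "k \<le> n \<Longrightarrow> root_split_prob n (n - k) = root_split_prob n k"
  unfolding root_split_prob_def by (simp add: binomial_symmetric[symmetric])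

lemma binomial_root_split_prob:
  assumes "k + m \<le> n"
  shows "real (n - m choose k) * root_split_prob n (k + m) = real (k + m choose m) * root_split_prob n m"
proof -
  have "real (n choose (k + m)) * real (k + m choose m) = real (n choose m) * real (n - m choose k)"
    using choose_mult[of m "k + m" n] assms by (simp flip: of_nat_mult)
  moreover have "real (n choose (k + m)) \<noteq> 0" "real (n choose m) \<noteq> 0" using assms by simp_all
  moreover have "a * (1 / (x * b)) = c * (1 / (x * d))"
    if "b * c = d * a" "b \<noteq> 0" "d \<noteq> 0" for a b c d x :: real
    using that by (cases "x = 0") (simp_all add: field_simps)
  ultimately show ?thesis unfolding root_split_prob_def by blast
qed

lemma sum_splits_containing_root_split_prob:
  fixes h :: "nat \<Rightarrow> real"
  assumes "finite S" "K \<subseteq> S" "K \<noteq> {}"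
  shows "(\<Sum>A | A \<in> splits S \<and> K \<subseteq> A. root_split_prob (card S) (card A) * h (card A)) =
    root_split_prob (card S) (card K) * (\<Sum>s<card S. real (s choose card K) * h s)"
proof -
  define n m where "n = card S" and "m = card K"
  have mn: "m \<le> n" using assms card_mono unfolding n_def m_def by blast
  have "(\<Sum>A | A \<in> splits S \<and> K \<subseteq> A. root_split_prob n (card A) * h (card A)) =
      (\<Sum>k<n - m. real (n - m choose k) * root_split_prob n (k + m) * h (k + m))"
    using sum_splits_containing[OF assms, of "\<lambda>s. root_split_prob n s * h s"]
    unfolding n_def m_def by (simp add: mult.assoc)
  also have "\<dots> = root_split_prob n m * (\<Sum>k<n - m. real (k + m choose m) * h (k + m))"
    unfolding sum_distrib_left
    by (intro sum.cong refl) (simp add: binomial_root_split_prob)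
  also have "(\<Sum>k<n - m. real (k + m choose m) * h (k + m)) = (\<Sum>s\<in>{m..<n}. real (s choose m) * h s)"
    using sum.shift_bounds_nat_ivl[of "\<lambda>s. real (s choose m) * h s" 0 m "n - m"] mn
    by (simp add: atLeast0LessThan)
  also have "\<dots> = (\<Sum>s<n. real (s choose m) * h s)"
    using sum.atLeastLessThan_concat[of 0 m n "\<lambda>s. real (s choose m) * h s"] mn
    by (simp add: atLeast0LessThan binomial_eq_0)
  finally show ?thesis unfolding n_def m_def .
qed

lemma yule_weight_Node:
  assumes S: "finite S" and A: "A \<in> splits S"
    and l: "l \<in> trees_on A" and r: "r \<in> trees_on (S - A)"
  shows "yule_weight S (Node l r) =
    2 * root_split_prob (card S) (card A) * yule_weight A l * yule_weight (S - A) r"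
proof -
  define n k where "n = card S" and "k = card A"
  have k: "1 \<le> k" "k < n" "card (S - A) = n - k"
    using card_splits[OF S A] by (simp_all add: n_def k_def)
  have "length (leaves (Node l r)) = n"
    using l r k distinct_card[of "leaves l"] distinct_card[of "leaves r"]
    by (auto simp: trees_on_def n_def k_def)
  moreover have "(2::real) ^ (n - 1) = 2 * 2 ^ (k - 1) * 2 ^ (n - k - 1)"
    using k by (simp flip: power_Suc power_add)
  moreover have "real (n choose k) = fact n / (fact k * fact (n - k))"
    using k by (simp add: binomial_fact)
  ultimately show ?thesis
    using k unfolding yule_weight_def root_split_prob_def n_def[symmetric] k_def[symmetric]
    by (simp add: field_simps)
qed

lemma yule_mean_Min_split:
  assumes "finite S" "2 \<le> card S"
  shows "yule_mean S F = 2 * (\<Sum>A\<in>{A \<in> splits S. Min S \<in> A}.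
    root_split_prob (card S) (card A) * yule_mean A (\<lambda>l. yule_mean (S - A) (\<lambda>r. F (Node l r))))"
proof -
  let ?M = "{A \<in> splits S. Min S \<in> A}"
  have fin: "finite (trees_on A)" "finite (trees_on (S - A))" if "A \<in> splits S" for A
    using assms(1) card_splits(1)[OF assms(1) that] finite_trees_on by auto
  have "yule_mean S F = (\<Sum>(A, l, r)\<in>(SIGMA A:?M. trees_on A \<times> trees_on (S - A)).
      yule_weight S (Node l r) * F (Node l r))"
    unfolding yule_mean_def trees_on_eq_Node_image[OF assms]
    by (subst sum.reindex[OF inj_on_Node_trees_on]) (simp add: case_prod_unfold)
  also have "\<dots> = (\<Sum>A\<in>?M. \<Sum>(l, r)\<in>trees_on A \<times> trees_on (S - A).
      yule_weight S (Node l r) * F (Node l r))"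
    by (rule sum.Sigma[symmetric]) (use finite_splits[OF assms(1)] fin in auto)
  also have "\<dots> = (\<Sum>A\<in>?M. 2 * (root_split_prob (card S) (card A) *
      yule_mean A (\<lambda>l. yule_mean (S - A) (\<lambda>r. F (Node l r)))))"
  proof (rule sum.cong[OF refl])
    fix A assume "A \<in> ?M"
    then have A: "A \<in> splits S" by simp
    show "(\<Sum>(l, r)\<in>trees_on A \<times> trees_on (S - A). yule_weight S (Node l r) * F (Node l r)) =
      2 * (root_split_prob (card S) (card A) * yule_mean A (\<lambda>l. yule_mean (S - A) (\<lambda>r. F (Node l r))))"
      unfolding sum.cartesian_product[symmetric] yule_mean_def sum_distrib_left
      by (intro sum.cong refl) (simp add: yule_weight_Node[OF assms(1) A] ac_simps)
  qed
  finally show ?thesis by (simp add: sum_distrib_left)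
qed

lemma yule_mean_root_split:
  assumes S: "finite S" "2 \<le> card S" "a \<in> S"
    and swap_invariant: "\<And>A l r. A \<in> splits S \<Longrightarrow> l \<in> trees_on A \<Longrightarrow> r \<in> trees_on (S - A) \<Longrightarrow>
      F (Node l r) = F (Node r l)"
  shows "yule_mean S F = 2 * (\<Sum>A\<in>{A \<in> splits S. a \<in> A}.
    root_split_prob (card S) (card A) * yule_mean A (\<lambda>l. yule_mean (S - A) (\<lambda>r. F (Node l r))))"
proof -
  define H where "H A = root_split_prob (card S) (card A) *
    yule_mean A (\<lambda>l. yule_mean (S - A) (\<lambda>r. F (Node l r)))" for A
  have H_complement: "H (S - A) = H A" if A: "A \<in> splits S" for A
  proof -
    have "root_split_prob (card S) (card (S - A)) = root_split_prob (card S) (card A)"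
      using card_splits[OF S(1) A] root_split_prob_complement by simp
    moreover have "yule_mean (S - A) (\<lambda>l. yule_mean (S - (S - A)) (\<lambda>r. F (Node l r)))
        = yule_mean A (\<lambda>l. yule_mean (S - A) (\<lambda>r. F (Node l r)))"
      unfolding splits_double_complement[OF A] yule_mean_swap[of "S - A"]
      by (intro yule_mean_cong) (rule swap_invariant[OF A, symmetric])
    ultimately show ?thesis unfolding H_def by simp
  qed
  have "Min S \<in> S" using S by (intro Min_in) auto
  have "yule_mean S F = 2 * sum H {A \<in> splits S. Min S \<in> A}"
    unfolding H_def by (rule yule_mean_Min_split[OF S(1,2)])
  also have "\<dots> = sum H (splits S)"
    by (rule sum_splits_halve[of S _ H, OF S(1) \<open>Min S \<in> S\<close> H_complement, symmetric])
  also have "\<dots> = 2 * sum H {A \<in> splits S. a \<in> A}"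
    by (rule sum_splits_halve[of S _ H, OF S(1) S(3) H_complement])
  finally show ?thesis unfolding H_def .
qed

lemma yule_mean_const:
  assumes "finite S" "S \<noteq> {}"
  shows "yule_mean S (\<lambda>_. c) = c"
  using assms
proof (induction S rule: finite_psubset_induct)
  case (psubset S)
  obtain a where a: "a \<in> S" using psubset.prems by auto
  show ?case
  proof (cases "2 \<le> card S")
    case False
    then show ?thesis
      using card_less_two_singleton[OF psubset.hyps a] by (simp add: yule_mean_singleton)
  next
    case True
    define n where "n = card S"
    have "yule_mean A (\<lambda>l. yule_mean (S - A) (\<lambda>r. c)) = c" if "A \<in> splits S" for A
    proof -
      have "A \<noteq> {}" "S - A \<noteq> {}" using that by (auto simp: splits_def)
      then show ?thesis using psubset.IH[of A] psubset.IH[of "S - A"] splits_psubset[OF that] by simp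
    qed
    then have "yule_mean S (\<lambda>_. c) =
        2 * (\<Sum>A | A \<in> splits S \<and> {a} \<subseteq> A. root_split_prob n (card A) * c)"
      using yule_mean_root_split[OF psubset.hyps True a] by (simp add: n_def)
    also have "\<dots> = 2 * root_split_prob n 1 * real (n choose 2) * c"
      using sum_splits_containing_root_split_prob[of S "{a}" "\<lambda>_. c"] psubset.hyps a
      by (simp add: n_def sum_distrib_right[symmetric] sum_lessThan_of_nat)
    also have "2 * root_split_prob n 1 * real (n choose 2) = 1"
      using True unfolding root_split_prob_def real_choose_two n_def by simp
    finally show ?thesis by simp
  qed
qed

lemma yule_mean_sq_diff:
  assumes "finite S" "S \<noteq> {}"
  shows "yule_mean S (\<lambda>t. yule_mean S (\<lambda>u. (x t - x u) ^ 2)) =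
    2 * (yule_mean S (\<lambda>t. x t ^ 2) - yule_mean S x ^ 2)"
proof -
  let ?E = "yule_mean S x" and ?E2 = "yule_mean S (\<lambda>t. x t ^ 2)"
  have sq: "(a - b) ^ 2 = b ^ 2 + (- 2 * a) * b + a ^ 2" for a b :: real
    by (simp add: power2_eq_square algebra_simps)
  have inner: "yule_mean S (\<lambda>u. (x t - x u) ^ 2) = x t ^ 2 + (- 2 * ?E) * x t + ?E2" for t
    unfolding sq yule_mean_add yule_mean_cmult yule_mean_const[OF assms] by simp
  have "yule_mean S (\<lambda>t. yule_mean S (\<lambda>u. (x t - x u) ^ 2)) = ?E2 + (- 2 * ?E) * ?E + ?E2"
    unfolding inner yule_mean_add yule_mean_cmult yule_mean_const[OF assms] ..
  then show ?thesis by (simp add: power2_eq_square algebra_simps)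
qed

section \<open>Moments of cophenetic values\<close>

lemma yule_mean_lca_depth_recursion:
  fixes f \<Psi> :: "nat \<Rightarrow> real"
  assumes S: "finite S" "2 \<le> card S" "i \<in> S" "j \<in> S" and "f 0 = 0"
    and subtree: "\<And>A. A \<subset> S \<Longrightarrow> {i, j} \<subseteq> A \<Longrightarrow>
      yule_mean A (\<lambda>t. f (Suc (lca_depth t i j))) = \<Psi> (card A)"
  shows "yule_mean S (\<lambda>t. f (lca_depth t i j)) =
    2 * root_split_prob (card S) (card {i, j}) * (\<Sum>s<card S. real (s choose card {i, j}) * \<Psi> s)"
proof -
  define n where "n = card S"
  let ?F = "\<lambda>t. f (lca_depth t i j)"
  have inner: "yule_mean A (\<lambda>l. yule_mean (S - A) (\<lambda>r. ?F (Node l r))) =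
      (if j \<in> A then \<Psi> (card A) else 0)" if A: "A \<in> splits S" "i \<in> A" for A
  proof -
    have ne: "A \<noteq> {}" "S - A \<noteq> {}" and fin: "finite A" "finite (S - A)"
      using A(1) card_splits(1)[OF S(1) A(1)] S(1) by (auto simp: splits_def)
    show ?thesis
    proof (cases "j \<in> A")
      case True
      then have "yule_mean A (\<lambda>l. yule_mean (S - A) (\<lambda>r. ?F (Node l r))) =
          yule_mean A (\<lambda>l. f (Suc (lca_depth l i j)))"
        using A(2) yule_mean_const[OF fin(2) ne(2)]
        by (intro yule_mean_cong) (simp add: set_leaves_trees_on)
      then show ?thesis using True A subtree[of A] splits_psubset[OF A(1)] by simp
    next
      case False
      then have "yule_mean A (\<lambda>l. yule_mean (S - A) (\<lambda>r. ?F (Node l r))) = yule_mean A (\<lambda>_. 0)"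
        using A(2) S(4) \<open>f 0 = 0\<close> yule_mean_const[OF fin(2) ne(2), of 0]
        by (intro yule_mean_cong) (auto simp: set_leaves_trees_on yule_mean_def)
      then show ?thesis using False yule_mean_const[OF fin(1) ne(1)] by simp
    qed
  qed
  have swap: "?F (Node l r) = ?F (Node r l)"
    if "A \<in> splits S" "l \<in> trees_on A" "r \<in> trees_on (S - A)" for A l r
    using that by (auto simp: set_leaves_trees_on)
  have "yule_mean S ?F = 2 * (\<Sum>A | A \<in> splits S \<and> i \<in> A.
      root_split_prob n (card A) * yule_mean A (\<lambda>l. yule_mean (S - A) (\<lambda>r. ?F (Node l r))))"
    unfolding n_def by (rule yule_mean_root_split[where F = ?F, OF S(1-3) swap])
  also have "\<dots> = 2 * (\<Sum>A | A \<in> splits S \<and> i \<in> A.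
      root_split_prob n (card A) * (if j \<in> A then \<Psi> (card A) else 0))"
    by (intro arg_cong[where f="\<lambda>x. 2 * x"] sum.cong refl) (simp add: inner del: lca_depth.simps)
  also have "\<dots> = 2 * (\<Sum>A | A \<in> splits S \<and> {i, j} \<subseteq> A. root_split_prob n (card A) * \<Psi> (card A))"
  proof -
    have "finite {A. A \<in> splits S \<and> i \<in> A}" using finite_splits[OF S(1)] by simp
    from sum.inter_filter[OF this, of "\<lambda>A. root_split_prob n (card A) * \<Psi> (card A)" "\<lambda>A. j \<in> A"]
    show ?thesis by (simp add: conj_ac) (intro sum.cong refl; simp)
  qed
  finally show ?thesis
    using sum_splits_containing_root_split_prob[of S "{i, j}" \<Psi>] S unfolding n_def by simp
qed

text \<open>The recurrence for \<open>X\<close> is the difference of consecutive instances of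
  \<open>(n - 1) (n choose m) X n = 2 \<Sum>s<n. (s choose m) (X s + G s)\<close>, which is what
  \<open>yule_mean_lca_depth_recursion\<close> yields once the moments on smaller leaf sets are known.\<close>
lemma yule_mean_lca_depth_eqI:
  fixes f g X G :: "nat \<Rightarrow> real" and i j :: nat
  defines "m \<equiv> card {i, j}"
  assumes S: "finite S" "i \<in> S" "j \<in> S"
    and f: "f 0 = 0" "\<And>d. f (Suc d) = f d + g d"
    and G: "\<And>A. finite A \<Longrightarrow> {i, j} \<subseteq> A \<Longrightarrow> yule_mean A (\<lambda>t. g (lca_depth t i j)) = G (card A)"
    and X: "X 1 = 0"
      "\<And>n. 1 \<le> n \<Longrightarrow> real n * real (Suc n choose m) * X (Suc n) =
        (real n + 1) * real (n choose m) * X n + 2 * real (n choose m) * G n"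
  shows "yule_mean S (\<lambda>t. f (lca_depth t i j)) = X (card S)"
  using S
proof (induction S rule: finite_psubset_induct)
  case (psubset S)
  have "m \<noteq> 0" unfolding m_def by simp
  have telescope: "(real n - 1) * real (n choose m) * X n = 2 * (\<Sum>s<n. real (s choose m) * (X s + G s))"
    for n
  proof (induction n)
    case (Suc n)
    then show ?case using X(2)[of n] \<open>m \<noteq> 0\<close> by (cases n) (simp_all add: algebra_simps binomial_eq_0)
  qed (use \<open>m \<noteq> 0\<close> in simp)
  show ?case
  proof (cases "2 \<le> card S")
    case False
    then have "S = {i}" "j = i" using card_less_two_singleton[OF psubset.hyps] psubset.prems by auto
    then show ?thesis using f(1) X(1) by (simp add: yule_mean_singleton)
  next
    case True
    define n where "n = card S"
    have "m \<le> n" unfolding m_def n_def using psubset by (intro card_mono) auto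
    have "yule_mean A (\<lambda>t. f (Suc (lca_depth t i j))) = X (card A) + G (card A)"
      if "A \<subset> S" "{i, j} \<subseteq> A" for A
      using psubset.IH[OF that(1)] G[of A] that finite_subset[OF _ psubset.hyps]
      by (simp add: f(2) yule_mean_add)
    then have "yule_mean S (\<lambda>t. f (lca_depth t i j)) =
        2 * root_split_prob n m * (\<Sum>s<n. real (s choose m) * (X s + G s))"
      unfolding n_def m_def
      by (rule yule_mean_lca_depth_recursion[where \<Psi>="\<lambda>s. X s + G s" and f=f, OF psubset.hyps True
            psubset.prems f(1)])
    also have "\<dots> = root_split_prob n m * (2 * (\<Sum>s<n. real (s choose m) * (X s + G s)))"
      by simp
    also have "\<dots> = X n"
      using True \<open>m \<le> n\<close> unfolding telescope[symmetric] root_split_prob_def n_def by simp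
    finally show ?thesis unfolding n_def .
  qed
qed

definition harm2 :: "nat \<Rightarrow> real" where
  "harm2 n = (\<Sum>k=1..n. 1 / real k ^ 2)"

lemma harm2_Suc: "harm2 (Suc n) = harm2 n + inverse (real (Suc n)) ^ 2"
  unfolding harm2_def by (simp add: inverse_eq_divide power_one_over)

lemma depth_eq_lca_depth: "i \<in> set (leaves t) \<Longrightarrow> depth t i = lca_depth t i i"
  by (induction t) auto

lemma yule_mean_depth_eq_lca_depth:
  "i \<in> S \<Longrightarrow> yule_mean S (\<lambda>t. f (depth t i)) = yule_mean S (\<lambda>t. f (lca_depth t i i))"
  by (intro yule_mean_cong) (simp add: depth_eq_lca_depth set_leaves_trees_on)

lemma yule_mean_depth:
  assumes "finite S" "i \<in> S"
  shows "yule_mean S (\<lambda>t. real (depth t i)) = 2 * (harm (card S) - 1)"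
  unfolding yule_mean_depth_eq_lca_depth[OF assms(2)]
proof (rule yule_mean_lca_depth_eqI[OF assms assms(2), where g="\<lambda>_. 1" and G="\<lambda>_. 1"])
  show "yule_mean A (\<lambda>t. 1) = 1" if "finite A" "{i, i} \<subseteq> A" for A
    using yule_mean_const that by auto
  have m: "card {i, i} = 1" by simp
  show "real n * real (Suc n choose card {i, i}) * (2 * (harm (Suc n) - 1)) =
      (real n + 1) * real (n choose card {i, i}) * (2 * (harm n - 1)) + 2 * real (n choose card {i, i}) * 1"
    for n
  proof -
    \<comment> \<open>\<open>algebra\<close> treats the inverses as ring elements constrained by these equations.\<close>
    have "inverse (1 + real n) * (1 + real n) = 1" by simp
    then show ?thesis unfolding harm_Suc of_nat_Suc m choose_one by algebra
  qed
qed (simp_all add: harm_def)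

lemma yule_mean_depth_sq:
  assumes "finite S" "i \<in> S"
  shows "yule_mean S (\<lambda>t. real (depth t i) ^ 2) =
    4 * harm (card S) ^ 2 - 4 * harm2 (card S) - 6 * harm (card S) + 6"
  unfolding yule_mean_depth_eq_lca_depth[OF assms(2), of "\<lambda>d. real d ^ 2"]
proof (rule yule_mean_lca_depth_eqI[OF assms assms(2),
      where g="\<lambda>d. 2 * real d + 1" and G="\<lambda>n. 2 * (2 * (harm n - 1)) + 1"])
  show "yule_mean A (\<lambda>t. 2 * real (lca_depth t i i) + 1) = 2 * (2 * (harm (card A) - 1)) + 1"
    if "finite A" "{i, i} \<subseteq> A" for A
    using that yule_mean_depth[OF that(1), of i] yule_mean_const[OF that(1), of 1]
    by (auto simp: yule_mean_add yule_mean_cmult yule_mean_depth_eq_lca_depth)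
  have m: "card {i, i} = 1" by simp
  show "real n * real (Suc n choose card {i, i}) *
        (4 * harm (Suc n) ^ 2 - 4 * harm2 (Suc n) - 6 * harm (Suc n) + 6) =
      (real n + 1) * real (n choose card {i, i}) * (4 * harm n ^ 2 - 4 * harm2 n - 6 * harm n + 6) +
      2 * real (n choose card {i, i}) * (2 * (2 * (harm n - 1)) + 1)"
    for n
  proof -
    have "inverse (1 + real n) * (1 + real n) = 1" by simp
    then show ?thesis unfolding harm_Suc harm2_Suc of_nat_Suc m choose_one by algebra
  qed
qed (simp_all add: harm_def harm2_def power2_eq_square algebra_simps)

lemma yule_mean_lca_depth:
  assumes "finite S" "i \<in> S" "j \<in> S" "i \<noteq> j"
  shows "yule_mean S (\<lambda>t. real (lca_depth t i j)) =
    (2 * real (card S) + 2 - 4 * harm (card S)) / (real (card S) - 1)"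
proof (rule yule_mean_lca_depth_eqI[OF assms(1-3), where g="\<lambda>_. 1" and G="\<lambda>_. 1"])
  show "yule_mean A (\<lambda>t. 1) = 1" if "finite A" "{i, j} \<subseteq> A" for A
    using yule_mean_const that by auto
  have m: "card {i, j} = 2" using assms(4) by simp
  show "real n * real (Suc n choose card {i, j}) *
        ((2 * real (Suc n) + 2 - 4 * harm (Suc n)) / (real (Suc n) - 1)) =
      (real n + 1) * real (n choose card {i, j}) * ((2 * real n + 2 - 4 * harm n) / (real n - 1)) +
      2 * real (n choose card {i, j}) * 1"
    if "1 \<le> n" for n
  proof (cases "n = 1")
    case True
    have h: "harm (Suc (Suc 0)) = (3 / 2 :: real)" by (simp add: harm_def)
    show ?thesis using True by (simp add: m numeral_2_eq_2 h)
  next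
    case False
    have "inverse (1 + real n) * (1 + real n) = 1" "inverse (real n) * real n = 1"
      "inverse (real n - 1) * (real n - 1) = 1"
      using that False by simp_all
    then show ?thesis
      unfolding m real_choose_two harm_Suc of_nat_Suc add_diff_cancel_left' divide_inverse
      by algebra
  qed
qed (simp_all add: harm_def)

lemma yule_mean_lca_depth_sq:
  assumes "finite S" "i \<in> S" "j \<in> S" "i \<noteq> j"
  shows "yule_mean S (\<lambda>t. real (lca_depth t i j) ^ 2) =
    (10 * real (card S) - 6 - 4 * harm (card S) - 8 * harm (card S) ^ 2 + 8 * harm2 (card S)) /
      (real (card S) - 1)"
proof (rule yule_mean_lca_depth_eqI[OF assms(1-3), where g="\<lambda>d. 2 * real d + 1"
      and G="\<lambda>n. 2 * ((2 * real n + 2 - 4 * harm n) / (real n - 1)) + 1"])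
  show "yule_mean A (\<lambda>t. 2 * real (lca_depth t i j) + 1) =
      2 * ((2 * real (card A) + 2 - 4 * harm (card A)) / (real (card A) - 1)) + 1"
    if "finite A" "{i, j} \<subseteq> A" for A
    using that yule_mean_lca_depth[OF that(1) _ _ assms(4)] yule_mean_const[OF that(1), of 1]
    by (auto simp: yule_mean_add yule_mean_cmult)
  have m: "card {i, j} = 2" using assms(4) by simp
  show "real n * real (Suc n choose card {i, j}) *
        ((10 * real (Suc n) - 6 - 4 * harm (Suc n) - 8 * harm (Suc n) ^ 2 + 8 * harm2 (Suc n)) /
          (real (Suc n) - 1)) =
      (real n + 1) * real (n choose card {i, j}) *
        ((10 * real n - 6 - 4 * harm n - 8 * harm n ^ 2 + 8 * harm2 n) / (real n - 1)) +
      2 * real (n choose card {i, j}) * (2 * ((2 * real n + 2 - 4 * harm n) / (real n - 1)) + 1)"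
    if "1 \<le> n" for n
  proof (cases "n = 1")
    case True
    have h: "harm (Suc (Suc 0)) = (3 / 2 :: real)" "harm2 (Suc (Suc 0)) = 5 / 4"
      by (simp_all add: harm_def harm2_def)
    show ?thesis using True by (simp add: m numeral_2_eq_2 h)
  next
    case False
    have "inverse (1 + real n) * (1 + real n) = 1" "inverse (real n) * real n = 1"
      "inverse (real n - 1) * (real n - 1) = 1"
      using that False by simp_all
    then show ?thesis
      unfolding m real_choose_two harm_Suc harm2_Suc of_nat_Suc add_diff_cancel_left' divide_inverse
      by algebra
  qed
qed (simp_all add: harm_def harm2_def power2_eq_square algebra_simps)

section \<open>The expected squared distance\<close>

lemma sum_upper_triangle:
  "(\<Sum>(i, j) | 1 \<le> i \<and> i \<le> j \<and> j \<le> n. if i = j then a else b) =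
    real n * a + real (n choose 2) * (b :: real)"
proof -
  have "{(i, j). 1 \<le> i \<and> i \<le> j \<and> j \<le> n} = Sigma {1..n} (\<lambda>i. {i..n})" by auto
  then have "(\<Sum>(i, j) | 1 \<le> i \<and> i \<le> j \<and> j \<le> n. if i = j then a else b) =
      (\<Sum>i=1..n. \<Sum>j=i..n. if i = j then a else b)"
    by (simp add: sum.Sigma)
  also have "\<dots> = (\<Sum>i=1..n. a + real (n - i) * b)"
  proof (rule sum.cong[OF refl])
    fix i assume "i \<in> {1..n}"
    then have "{i..n} = insert i {i<..n}" by auto
    then show "(\<Sum>j=i..n. if i = j then a else b) = a + real (n - i) * b" by simp
  qed
  also have "(\<Sum>i=1..n. real (n - i)) = (\<Sum>k<n. real k)"
    by (rule sum.reindex_bij_witness[where i="\<lambda>k. n - k" and j="\<lambda>i. n - i"]) auto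
  then have "(\<Sum>i=1..n. a + real (n - i) * b) = real n * a + real (n choose 2) * b"
    by (simp add: sum.distrib sum_distrib_right[symmetric] sum_lessThan_of_nat)
  finally show ?thesis .
qed

lemma expected_D2_yule_eq_sum_pairs:
  "expected_D2_yule n = (\<Sum>(i, j) | 1 \<le> i \<and> i \<le> j \<and> j \<le> n.
    2 * (yule_mean {1..n} (\<lambda>t. real (coph t i j) ^ 2) - yule_mean {1..n} (\<lambda>t. real (coph t i j)) ^ 2))"
proof -
  let ?S = "{1..n}" and ?P = "{(i, j). 1 \<le> i \<and> i \<le> j \<and> j \<le> n}"
  let ?D = "\<lambda>T T' (i, j). (real (coph T i j) - real (coph T' i j)) ^ 2"
  have d2: "d_coph2 n T T' ^ 2 = (\<Sum>q\<in>?P. ?D T T' q)" for T T'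
    unfolding d_coph2_def by (rule real_sqrt_pow2, rule sum_nonneg) (auto split: prod.splits)
  have "expected_D2_yule n = yule_mean ?S (\<lambda>T. yule_mean ?S (\<lambda>T'. d_coph2 n T T' ^ 2))"
    unfolding expected_D2_yule_def yule_mean_def yule_prob_def yule_weight_def phylo_trees_def
      trees_on_def sum_distrib_left
    by (simp add: ac_simps)
  also have "\<dots> = yule_mean ?S (\<lambda>T. yule_mean ?S (\<lambda>T'. \<Sum>q\<in>?P. ?D T T' q))"
    unfolding d2 ..
  also have "\<dots> = (\<Sum>q\<in>?P. yule_mean ?S (\<lambda>T. yule_mean ?S (\<lambda>T'. ?D T T' q)))"
    unfolding yule_mean_sum ..
  also have "\<dots> = (\<Sum>(i, j)\<in>?P.
      2 * (yule_mean ?S (\<lambda>t. real (coph t i j) ^ 2) - yule_mean ?S (\<lambda>t. real (coph t i j)) ^ 2))"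
    by (intro sum.cong refl) (clarsimp, subst yule_mean_sq_diff, auto)
  finally show ?thesis .
qed

theorem theorem2:
  fixes n :: nat
  assumes "n \<ge> 2"
  defines "H \<equiv> (\<Sum>i=1..n. 1 / real i)"
  shows "expected_D2_yule n =
    2 * real n / (real n - 1) *
      (3 * (real n)^2 - 10 * real n - 1 + 8 * (real n + 1) * H - 4 * (real n + 1) * H^2)"
proof -
  let ?P = "{(i, j). 1 \<le> i \<and> i \<le> j \<and> j \<le> n}"
  have H: "harm n = H" unfolding H_def harm_def by (simp add: inverse_eq_divide)
  define \<alpha> where "\<alpha> = 2 * (4 * H ^ 2 - 4 * harm2 n - 6 * H + 6 - (2 * (H - 1)) ^ 2)"
  define \<beta> where "\<beta> = 2 * ((10 * real n - 6 - 4 * H - 8 * H ^ 2 + 8 * harm2 n) / (real n - 1) -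
    ((2 * real n + 2 - 4 * H) / (real n - 1)) ^ 2)"
  have "2 * (yule_mean {1..n} (\<lambda>t. real (coph t i j) ^ 2) - yule_mean {1..n} (\<lambda>t. real (coph t i j)) ^ 2) =
      (if i = j then \<alpha> else \<beta>)" if "(i, j) \<in> ?P" for i j
    using that
    by (cases "i = j") (simp_all add: coph_def \<alpha>_def \<beta>_def H[symmetric] yule_mean_depth
        yule_mean_depth_sq yule_mean_lca_depth yule_mean_lca_depth_sq)
  then have "expected_D2_yule n = (\<Sum>(i, j)\<in>?P. if i = j then \<alpha> else \<beta>)"
    unfolding expected_D2_yule_eq_sum_pairs by (intro sum.cong) auto
  also have "\<dots> = real n * \<alpha> + real (n choose 2) * \<beta>"
    by (rule sum_upper_triangle)
  also have "\<dots> = 2 * real n / (real n - 1) *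
      (3 * (real n)^2 - 10 * real n - 1 + 8 * (real n + 1) * H - 4 * (real n + 1) * H^2)"
  proof -
    have "inverse (real n - 1) * (real n - 1) = 1" using assms(1) by simp
    then show ?thesis unfolding \<alpha>_def \<beta>_def real_choose_two divide_inverse by algebra
  qed
  finally show ?thesis .
qed

end
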